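(* Let $G$ be a group with identity $e$, $A$ a set with at least two elements, and $\tau: A^G\to A^G$ a lazy cellular automaton. If $\mathrm{ord}(\tau) < \infty$, then the period of $\tau$ is $1$.
   Context: $A^G$ is the set of maps $G \to A$ with shift action $(g\cdot x)(h) := x(hg)$. A cellular automaton is a map $\tau : A^G \to A^G$ with a finite $S \subseteq G$ and $\mu : A^S \to A$ such that $\tau(x)(g) = \mu((g\cdot x)|_S)$. $\tau$ is lazy if there is such a local defining map $\mu : A^S \to A$ with $e \in S$ and $p \in A^S$ such that for all $z \in A^S$: $\mu(z) = z(e)$ iff $z \neq p$. $\tau^k$ is the $k$-fold composition, $\tau^0$ the identity; $\mathrm{ord}(\tau) := |\{\tau^k : k \in \mathbb{N}\}|$ with $\mathbb{N}=\{0,1,2,\dots\}$. If $\mathrm{ord}(\tau)<\infty$, the index $m \in \mathbb{N}$ and period $n \in \mathbb{Z}_+$ of $\tau$ are the smallest values such that $\tau^m = \tau^{m+n}$. *)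

theory Defs
  imports Main "HOL-Library.FuncSet"
begin

text \<open>The group G is the type 'g of class group_add (not necessarily abelian),
  written additively: the identity e is 0 and the product h g is h + g.\<close>

definition shift :: "'g::group_add \<Rightarrow> ('g \<Rightarrow> 'a) \<Rightarrow> ('g \<Rightarrow> 'a)" where
  "shift g x = (\<lambda>h. x (h + g))"

text \<open>tau is a cellular automaton with memory set S and local map mu : A^S -> A;
  elements of A^S are the extensional functions on S.\<close>
definition is_local_rule ::
  "(('g::group_add \<Rightarrow> 'a) \<Rightarrow> ('g \<Rightarrow> 'a)) \<Rightarrow> 'g set \<Rightarrow> (('g \<Rightarrow> 'a) \<Rightarrow> 'a) \<Rightarrow> bool" where
  "is_local_rule \<tau> S \<mu> \<longleftrightarrow> finite S \<and> (\<forall>x g. \<tau> x g = \<mu> (restrict (shift g x) S))"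

definition cellular_automaton :: "(('g::group_add \<Rightarrow> 'a) \<Rightarrow> ('g \<Rightarrow> 'a)) \<Rightarrow> bool" where
  "cellular_automaton \<tau> \<longleftrightarrow> (\<exists>S \<mu>. is_local_rule \<tau> S \<mu>)"

definition lazy :: "(('g::group_add \<Rightarrow> 'a) \<Rightarrow> ('g \<Rightarrow> 'a)) \<Rightarrow> bool" where
  "lazy \<tau> \<longleftrightarrow> (\<exists>S \<mu> p. is_local_rule \<tau> S \<mu> \<and> 0 \<in> S \<and>
      p \<in> (S \<rightarrow>\<^sub>E (UNIV :: 'a set)) \<and>
      (\<forall>z \<in> S \<rightarrow>\<^sub>E (UNIV :: 'a set). (\<mu> z = z 0 \<longleftrightarrow> z \<noteq> p)))"

definition finite_order :: "('b \<Rightarrow> 'b) \<Rightarrow> bool" where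
  "finite_order \<tau> \<longleftrightarrow> finite {\<tau> ^^ k | k. True}"

definition ca_index :: "('b \<Rightarrow> 'b) \<Rightarrow> nat" where
  "ca_index \<tau> = (LEAST m. \<exists>n>0. \<tau> ^^ m = \<tau> ^^ (m + n))"

definition ca_period :: "('b \<Rightarrow> 'b) \<Rightarrow> nat" where
  "ca_period \<tau> = (LEAST n. n > 0 \<and> \<tau> ^^ (ca_index \<tau>) = \<tau> ^^ (ca_index \<tau> + n))"

end

theory Submission
  imports Defs
begin

text \<open>A lazy cellular automaton changes a cell only where the pattern p occurs,
  and then always from a := p(e) to b := \<mu>(p) \<noteq> a. So a cell holding b keeps it forever,
  and a configuration that \<tau> changes at some cell can never come back to itself under
  further iteration. Hence every periodic configuration is fixed; applied to the
  configurations in the image of \<tau>^m, where m is the index, this gives \<tau>^(m+1) = \<tau>^m.\<close>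

lemma finite_order_imp_funpow_repeats:
  assumes "finite_order (f :: 'b \<Rightarrow> 'b)"
  shows "\<exists>m n. n > 0 \<and> f ^^ m = f ^^ (m + n)"
proof -
  have "finite (range (\<lambda>k::nat. f ^^ k))"
    using assms by (simp add: finite_order_def full_SetCompr_eq)
  then have "\<not> inj (\<lambda>k::nat. f ^^ k)"
    using finite_imageD infinite_UNIV_nat by blast
  then obtain i j :: nat where "i < j" "f ^^ i = f ^^ j"
    unfolding inj_def by (metis linorder_neqE_nat)
  then show ?thesis
    by (intro exI[of _ i] exI[of _ "j - i"]) auto
qed

lemma ca_index_repeats:
  assumes "finite_order (f :: 'b \<Rightarrow> 'b)"
  shows "\<exists>n>0. f ^^ ca_index f = f ^^ (ca_index f + n)"
  unfolding ca_index_def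
  using finite_order_imp_funpow_repeats[OF assms] by (rule LeastI_ex)

lemma ca_period_eq_1I:
  assumes "f ^^ Suc (ca_index f) = f ^^ ca_index f"
  shows "ca_period f = 1"
proof -
  have one: "1 > (0::nat) \<and> f ^^ ca_index f = f ^^ (ca_index f + 1)"
    using assms by simp
  then have "ca_period f \<le> 1"
    unfolding ca_period_def by (rule Least_le)
  moreover have "ca_period f > 0"
    unfolding ca_period_def using one by (rule LeastI2) auto
  ultimately show ?thesis by simp
qed

lemma funpow_stable_if_periodic_points_fixed:
  assumes repeat: "f ^^ m = f ^^ (m + n)"
    and fixed: "\<And>y. (f ^^ n) y = y \<Longrightarrow> f y = y"
  shows "f ^^ Suc m = f ^^ m"
proof
  fix x
  have "(f ^^ n) ((f ^^ m) x) = (f ^^ (m + n)) x"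
    by (simp add: funpow_add add.commute[of m n])
  also have "\<dots> = (f ^^ m) x"
    using repeat by simp
  finally have "(f ^^ n) ((f ^^ m) x) = (f ^^ m) x" .
  then show "(f ^^ Suc m) x = (f ^^ m) x"
    using fixed by simp
qed

lemma lazy_changes_only_one_way:
  fixes \<tau> :: "('g::group_add \<Rightarrow> 'a) \<Rightarrow> ('g \<Rightarrow> 'a)"
  assumes "lazy \<tau>"
  obtains a b :: 'a where "a \<noteq> b" "\<And>x g. \<tau> x g = x g \<or> (x g = a \<and> \<tau> x g = b)"
proof -
  obtain S \<mu> p where loc: "is_local_rule \<tau> S \<mu>" and "0 \<in> S"
    and p: "p \<in> S \<rightarrow>\<^sub>E (UNIV :: 'a set)"
    and lazy_at: "\<forall>z \<in> S \<rightarrow>\<^sub>E (UNIV :: 'a set). \<mu> z = z 0 \<longleftrightarrow> z \<noteq> p"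
    using assms unfolding lazy_def by blast
  have "\<tau> x g = x g \<or> (x g = p 0 \<and> \<tau> x g = \<mu> p)" for x g
  proof -
    let ?z = "restrict (shift g x) S"
    have "\<tau> x g = \<mu> ?z"
      using loc unfolding is_local_rule_def by blast
    moreover have "?z 0 = x g"
      using \<open>0 \<in> S\<close> by (simp add: shift_def)
    moreover have "?z \<noteq> p \<Longrightarrow> \<mu> ?z = ?z 0"
      using lazy_at restrict_PiE[of "shift g x" S] by blast
    ultimately show ?thesis by metis
  qed
  moreover have "p 0 \<noteq> \<mu> p"
    using lazy_at p by auto
  ultimately show ?thesis using that by blast
qed

lemma one_way_periodic_point_fixed:
  fixes f :: "('i \<Rightarrow> 'a) \<Rightarrow> ('i \<Rightarrow> 'a)"
  assumes "a \<noteq> b"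
    and one_way: "\<And>x i. f x i = x i \<or> (x i = a \<and> f x i = b)"
    and "n > 0" and periodic: "(f ^^ n) y = y"
  shows "f y = y"
proof (rule ext, rule ccontr)
  have keeps_b: "(f ^^ k) x i = b" if "x i = b" for k x i
    using that by (induction k) (use one_way \<open>a \<noteq> b\<close> in auto)
  fix i
  assume "f y i \<noteq> y i"
  then have "y i = a" "f y i = b"
    using one_way[of y i] by auto
  obtain k where "n = Suc k"
    using \<open>n > 0\<close> gr0_implies_Suc by blast
  then have "(f ^^ n) y i = (f ^^ k) (f y) i"
    by (simp only: funpow_Suc_right comp_apply)
  also have "\<dots> = b"
    using keeps_b \<open>f y i = b\<close> by blast
  finally show False
    using periodic \<open>y i = a\<close> \<open>a \<noteq> b\<close> by simp
qed

theorem proposition2: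
  fixes \<tau> :: "('g::group_add \<Rightarrow> 'a) \<Rightarrow> ('g \<Rightarrow> 'a)"
  assumes "\<exists>a b :: 'a. a \<noteq> b"
    and "cellular_automaton \<tau>"
    and "lazy \<tau>"
    and "finite_order \<tau>"
  shows "ca_period \<tau> = 1"
proof -
  \<comment> \<open>Laziness alone yields a local rule and two distinct letters.\<close>
  obtain a b :: 'a where "a \<noteq> b" and one_way: "\<And>x g. \<tau> x g = x g \<or> (x g = a \<and> \<tau> x g = b)"
    using lazy_changes_only_one_way[OF \<open>lazy \<tau>\<close>] by blast
  obtain n where "n > 0" and repeat: "\<tau> ^^ ca_index \<tau> = \<tau> ^^ (ca_index \<tau> + n)"
    using ca_index_repeats[OF \<open>finite_order \<tau>\<close>] by blast
  have "\<tau> ^^ Suc (ca_index \<tau>) = \<tau> ^^ ca_index \<tau>"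
    using repeat one_way_periodic_point_fixed[of a b \<tau>, OF \<open>a \<noteq> b\<close> one_way \<open>n > 0\<close>]
    by (rule funpow_stable_if_periodic_points_fixed)
  then show ?thesis
    by (rule ca_period_eq_1I)
qed

end
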